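(* Let $\mathbf{W}=\langle W;\to,\neg,{}^{+},{}^{-},1\rangle$ be a quasi-Wajsberg* algebra and $\tau$ the congruence on $\mathbf{W}$ defined by $\langle x,y\rangle\in\tau$ iff $x=y$ or $x,y\in R(W)$. Then the quotient $\mathbf{W}/\tau$ is a flat quasi-Wajsberg* algebra.
   Context: A quasi-Wajsberg* algebra is an algebra $\langle W;\to,\neg,{}^{+},{}^{-},1\rangle$ of type $\langle2,1,1,1,0\rangle$ such that for all $x,y,z\in W$: (QW*1) $x\to y=\neg y\to\neg x$; (QW*2) $(x\to 1)\to((y\to 1)\to z)=(y\to 1)\to((x\to 1)\to z)$; (QW*3) $(1\to x)\to 1=1$; (QW*4) $(z\to z)\to(x\to y)=x\to y$; (QW*5) $(1\to 1)\to x^{+}=((1\to 1)\to x)^{+}=(x\to 1)\to 1$ and $(1\to 1)\to x^{-}=((1\to 1)\to x)^{-}=(x\to\neg 1)\to\neg 1$; (QW*6) $x\to y=(y^{+}\to x^{-})\to(x^{+}\to y^{-})$; (QW*7) $\neg(x\to y)=y\to x$; (QW*8) $\neg\neg x=x$; (QW*9) $(x\to(\neg x\to y))^{+}=x^{+}\to(\neg x^{+}\to y^{+})$; (QW*10) $x\vee y=y\vee x$; (QW*11) $x\vee(y\vee z)=(x\vee y)\vee z$; (QW*12) $x\to(y\vee z)=(x\to y)\vee(x\to z)$; where $x\vee y:=((x^{+}\to y^{+})^{+}\to(\neg x)^{-})\to((y^{-}\to x^{-})^{-}\to x^{-})$. Conventions: ${}^+,{}^-$ bind tighter than $\neg$,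 which binds tighter than $\to$. Put $0:=1\to 1$ and $R(W):=\{x\in W:0\to x=x\}$. The quotient $\mathbf{W}/\tau$ has the induced operations $(x/\tau)\to(y/\tau)=(x\to y)/\tau$, $\neg(x/\tau)=(\neg x)/\tau$, $(x/\tau)^{+}=x^{+}/\tau$, $(x/\tau)^{-}=x^{-}/\tau$ and constant $1/\tau$. A quasi-Wajsberg* algebra is flat if it satisfies $0=1$, i.e. $1\to 1=1$. *)

theory Defs
  imports Main
begin

definition qw_join :: "('a \<Rightarrow> 'a \<Rightarrow> 'a) \<Rightarrow> ('a \<Rightarrow> 'a) \<Rightarrow> ('a \<Rightarrow> 'a) \<Rightarrow> ('a \<Rightarrow> 'a) \<Rightarrow> 'a \<Rightarrow> 'a \<Rightarrow> 'a" where
  "qw_join imp neg pl mi x y =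
     imp (imp (pl (imp (pl x) (pl y))) (mi (neg x))) (imp (mi (imp (mi y) (mi x))) (mi x))"

definition qw_star :: "'a set \<Rightarrow> ('a \<Rightarrow> 'a \<Rightarrow> 'a) \<Rightarrow> ('a \<Rightarrow> 'a) \<Rightarrow> ('a \<Rightarrow> 'a) \<Rightarrow> ('a \<Rightarrow> 'a) \<Rightarrow> 'a \<Rightarrow> bool" where
  "qw_star W imp neg pl mi one \<longleftrightarrow>
     one \<in> W \<and>
     (\<forall>x\<in>W. \<forall>y\<in>W. imp x y \<in> W) \<and>
     (\<forall>x\<in>W. neg x \<in> W \<and> pl x \<in> W \<and> mi x \<in> W) \<and>
     (\<forall>x\<in>W. \<forall>y\<in>W. imp x y = imp (neg y) (neg x)) \<and>
     (\<forall>x\<in>W. \<forall>y\<in>W. \<forall>z\<in>W.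
        imp (imp x one) (imp (imp y one) z) = imp (imp y one) (imp (imp x one) z)) \<and>
     (\<forall>x\<in>W. imp (imp one x) one = one) \<and>
     (\<forall>x\<in>W. \<forall>y\<in>W. \<forall>z\<in>W. imp (imp z z) (imp x y) = imp x y) \<and>
     (\<forall>x\<in>W. imp (imp one one) (pl x) = pl (imp (imp one one) x) \<and>
              pl (imp (imp one one) x) = imp (imp x one) one) \<and>
     (\<forall>x\<in>W. imp (imp one one) (mi x) = mi (imp (imp one one) x) \<and>
              mi (imp (imp one one) x) = imp (imp x (neg one)) (neg one)) \<and>
     (\<forall>x\<in>W. \<forall>y\<in>W. imp x y = imp (imp (pl y) (mi x)) (imp (pl x) (mi y))) \<and>
     (\<forall>x\<in>W. \<forall>y\<in>W. neg (imp x y) = imp y x) \<and>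
     (\<forall>x\<in>W. neg (neg x) = x) \<and>
     (\<forall>x\<in>W. \<forall>y\<in>W. pl (imp x (imp (neg x) y)) = imp (pl x) (imp (neg (pl x)) (pl y))) \<and>
     (\<forall>x\<in>W. \<forall>y\<in>W. qw_join imp neg pl mi x y = qw_join imp neg pl mi y x) \<and>
     (\<forall>x\<in>W. \<forall>y\<in>W. \<forall>z\<in>W.
        qw_join imp neg pl mi x (qw_join imp neg pl mi y z) =
        qw_join imp neg pl mi (qw_join imp neg pl mi x y) z) \<and>
     (\<forall>x\<in>W. \<forall>y\<in>W. \<forall>z\<in>W.
        imp x (qw_join imp neg pl mi y z) =
        qw_join imp neg pl mi (imp x y) (imp x z))"

text \<open>R(W) = {x \<in> W. 0 \<rightarrow> x = x} with 0 = 1 \<rightarrow> 1.\<close>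
definition qw_R :: "'a set \<Rightarrow> ('a \<Rightarrow> 'a \<Rightarrow> 'a) \<Rightarrow> 'a \<Rightarrow> 'a set" where
  "qw_R W imp one = {x \<in> W. imp (imp one one) x = x}"

definition qw_tau :: "'a set \<Rightarrow> ('a \<Rightarrow> 'a \<Rightarrow> 'a) \<Rightarrow> 'a \<Rightarrow> ('a \<times> 'a) set" where
  "qw_tau W imp one =
     {(x, y). x \<in> W \<and> y \<in> W \<and> (x = y \<or> (x \<in> qw_R W imp one \<and> y \<in> qw_R W imp one))}"

definition rep :: "'a set \<Rightarrow> 'a" where
  "rep X = (SOME x. x \<in> X)"

definition quot_op2 :: "('a \<times> 'a) set \<Rightarrow> ('a \<Rightarrow> 'a \<Rightarrow> 'a) \<Rightarrow> 'a set \<Rightarrow> 'a set \<Rightarrow> 'a set" where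
  "quot_op2 r f X Y = r `` {f (rep X) (rep Y)}"

definition quot_op1 :: "('a \<times> 'a) set \<Rightarrow> ('a \<Rightarrow> 'a) \<Rightarrow> 'a set \<Rightarrow> 'a set" where
  "quot_op1 r f X = r `` {f (rep X)}"

definition qw_flat :: "('a \<Rightarrow> 'a \<Rightarrow> 'a) \<Rightarrow> 'a \<Rightarrow> bool" where
  "qw_flat imp one \<longleftrightarrow> imp one one = one"

end

theory Submission
  imports Defs
begin

text \<open>By (QW*4) every implication \<open>x \<rightarrow> y\<close> lies in \<open>R(W)\<close>, and \<open>R(W)\<close> is closed
  under \<open>\<not>\<close>, \<open>\<^sup>+\<close>, \<open>\<^sup>-\<close> and contains \<open>1\<close>. Hence \<open>\<tau>\<close> is a congruence whose
  classes are \<open>R(W)\<close> and singletons, and in the quotient every implication equals the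
  class \<open>R(W) = 1/\<tau>\<close>, which is fixed by all unary operations. So every axiom whose
  sides are implications holds trivially, the quotient is flat, and the only axiom
  with content, \<open>\<not>\<not>x = x\<close>, is inherited from \<open>W\<close>.\<close>

lemma rep_in_quotient:
  assumes "equiv A r" and "X \<in> A // r"
  shows "rep X \<in> X"
  using in_quotient_imp_non_empty[OF assms] unfolding rep_def by (simp add: some_in_eq)

lemma quot_op1_class:
  assumes r: "equiv A r" and "a \<in> A"
    and compat: "\<And>x y. (x, y) \<in> r \<Longrightarrow> (f x, f y) \<in> r"
  shows "quot_op1 r f (r `` {a}) = r `` {f a}"
proof -
  have "(a, rep (r `` {a})) \<in> r"
    using rep_in_quotient[OF r quotientI[OF \<open>a \<in> A\<close>]] by simp
  then have "r `` {f a} = r `` {f (rep (r `` {a}))}"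
    using equiv_class_eq[OF r] compat by blast
  then show ?thesis unfolding quot_op1_def by simp
qed

lemma quot_op2_class:
  assumes r: "equiv A r" and "a \<in> A" "b \<in> A"
    and compat: "\<And>x x' y y'. (x, x') \<in> r \<Longrightarrow> (y, y') \<in> r \<Longrightarrow> (f x y, f x' y') \<in> r"
  shows "quot_op2 r f (r `` {a}) (r `` {b}) = r `` {f a b}"
proof -
  have "(a, rep (r `` {a})) \<in> r" "(b, rep (r `` {b})) \<in> r"
    using rep_in_quotient[OF r quotientI] \<open>a \<in> A\<close> \<open>b \<in> A\<close> by simp_all
  then have "r `` {f a b} = r `` {f (rep (r `` {a})) (rep (r `` {b}))}"
    using equiv_class_eq[OF r] compat by blast
  then show ?thesis unfolding quot_op2_def by simp
qed

locale quasi_wajsberg_star =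
  fixes W :: "'a set" and imp :: "'a \<Rightarrow> 'a \<Rightarrow> 'a" and neg pl mi :: "'a \<Rightarrow> 'a" and one :: 'a
  assumes qw_star: "qw_star W imp neg pl mi one"
begin

abbreviation R :: "'a set" where "R \<equiv> qw_R W imp one"
abbreviation \<tau> :: "('a \<times> 'a) set" where "\<tau> \<equiv> qw_tau W imp one"

lemma one_closed: "one \<in> W"
  using qw_star unfolding qw_star_def by (elim conjE) blast

lemma imp_closed: "x \<in> W \<Longrightarrow> y \<in> W \<Longrightarrow> imp x y \<in> W"
  using qw_star unfolding qw_star_def by (elim conjE) blast

lemma neg_closed: "x \<in> W \<Longrightarrow> neg x \<in> W"
  using qw_star unfolding qw_star_def by (elim conjE) blast

lemma pl_closed: "x \<in> W \<Longrightarrow> pl x \<in> W"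
  using qw_star unfolding qw_star_def by (elim conjE) blast

lemma mi_closed: "x \<in> W \<Longrightarrow> mi x \<in> W"
  using qw_star unfolding qw_star_def by (elim conjE) blast

lemma zero_imp_imp: "x \<in> W \<Longrightarrow> y \<in> W \<Longrightarrow> imp (imp one one) (imp x y) = imp x y"
  using qw_star one_closed unfolding qw_star_def by (elim conjE) blast

lemma zero_imp_one: "imp (imp one one) one = one"
  using qw_star one_closed unfolding qw_star_def by (elim conjE) blast

lemma zero_imp_pl: "x \<in> W \<Longrightarrow> imp (imp one one) (pl x) = pl (imp (imp one one) x)"
  using qw_star unfolding qw_star_def by (elim conjE) blast

lemma zero_imp_mi: "x \<in> W \<Longrightarrow> imp (imp one one) (mi x) = mi (imp (imp one one) x)"
  using qw_star unfolding qw_star_def by (elim conjE) blast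

lemma neg_imp: "x \<in> W \<Longrightarrow> y \<in> W \<Longrightarrow> neg (imp x y) = imp y x"
  using qw_star unfolding qw_star_def by (elim conjE) blast

lemma neg_neg: "x \<in> W \<Longrightarrow> neg (neg x) = x"
  using qw_star unfolding qw_star_def by (elim conjE) blast

lemma R_subset: "R \<subseteq> W"
  unfolding qw_R_def by blast

lemma imp_in_R: "x \<in> W \<Longrightarrow> y \<in> W \<Longrightarrow> imp x y \<in> R"
  unfolding qw_R_def using imp_closed zero_imp_imp by blast

lemma one_in_R: "one \<in> R"
  unfolding qw_R_def using one_closed zero_imp_one by blast

lemma neg_in_R:
  assumes "x \<in> R"
  shows "neg x \<in> R"
proof -
  have x: "x \<in> W" "imp (imp one one) x = x" using assms unfolding qw_R_def by auto
  then have "neg x = imp x (imp one one)"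
    using neg_imp imp_closed one_closed by metis
  then show ?thesis using imp_in_R x(1) imp_closed one_closed by simp
qed

lemma pl_in_R: "x \<in> R \<Longrightarrow> pl x \<in> R"
  and mi_in_R: "x \<in> R \<Longrightarrow> mi x \<in> R"
  unfolding qw_R_def using pl_closed mi_closed zero_imp_pl zero_imp_mi by auto

lemma tau_equiv: "equiv W \<tau>"
  unfolding qw_tau_def by (rule equivI) (auto simp: refl_on_def sym_def trans_def)

lemma tau_class: "a \<in> W \<Longrightarrow> \<tau> `` {a} = (if a \<in> R then R else {a})"
  using R_subset unfolding qw_tau_def by auto

lemma class_one: "\<tau> `` {one} = R"
  using tau_class one_closed one_in_R by simp

lemma R_in_quotient: "R \<in> W // \<tau>"
  using quotientI[OF one_closed, of \<tau>] class_one by simp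

lemma tau_compat_unary:
  assumes "\<And>x. x \<in> W \<Longrightarrow> f x \<in> W" and "\<And>x. x \<in> R \<Longrightarrow> f x \<in> R"
    and "(x, y) \<in> \<tau>"
  shows "(f x, f y) \<in> \<tau>"
  using assms unfolding qw_tau_def by auto

lemma tau_compat_imp: "(x, x') \<in> \<tau> \<Longrightarrow> (y, y') \<in> \<tau> \<Longrightarrow> (imp x y, imp x' y') \<in> \<tau>"
  unfolding qw_tau_def using imp_in_R imp_closed by auto

lemma quot_neg_class: "a \<in> W \<Longrightarrow> quot_op1 \<tau> neg (\<tau> `` {a}) = \<tau> `` {neg a}"
  using quot_op1_class[OF tau_equiv, of a neg] tau_compat_unary[of neg] neg_closed neg_in_R
  by blast

lemma quot_pl_class: "a \<in> W \<Longrightarrow> quot_op1 \<tau> pl (\<tau> `` {a}) = \<tau> `` {pl a}"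
  using quot_op1_class[OF tau_equiv, of a pl] tau_compat_unary[of pl] pl_closed pl_in_R
  by blast

lemma quot_mi_class: "a \<in> W \<Longrightarrow> quot_op1 \<tau> mi (\<tau> `` {a}) = \<tau> `` {mi a}"
  using quot_op1_class[OF tau_equiv, of a mi] tau_compat_unary[of mi] mi_closed mi_in_R
  by blast

lemma quot_imp_eq_R:
  assumes "X \<in> W // \<tau>" and "Y \<in> W // \<tau>"
  shows "quot_op2 \<tau> imp X Y = R"
proof -
  obtain a b where ab: "a \<in> W" "b \<in> W" and X: "X = \<tau> `` {a}" and Y: "Y = \<tau> `` {b}"
    using assms by (metis quotientE)
  have "quot_op2 \<tau> imp X Y = \<tau> `` {imp a b}"
    unfolding X Y using quot_op2_class[OF tau_equiv ab tau_compat_imp] .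
  also have "\<dots> = R"
    using tau_class imp_closed[OF ab] imp_in_R[OF ab] by simp
  finally show ?thesis .
qed

lemma quot_unary_R:
  "quot_op1 \<tau> neg R = R" "quot_op1 \<tau> pl R = R" "quot_op1 \<tau> mi R = R"
proof -
  have "\<tau> `` {neg one} = R" "\<tau> `` {pl one} = R" "\<tau> `` {mi one} = R"
    using tau_class one_closed one_in_R neg_closed pl_closed mi_closed neg_in_R pl_in_R mi_in_R
    by simp_all
  then show "quot_op1 \<tau> neg R = R" "quot_op1 \<tau> pl R = R" "quot_op1 \<tau> mi R = R"
    using quot_neg_class[OF one_closed] quot_pl_class[OF one_closed] quot_mi_class[OF one_closed]
    unfolding class_one by simp_all
qed

lemma quot_unary_closed:
  assumes "X \<in> W // \<tau>"
  shows "quot_op1 \<tau> neg X \<in> W // \<tau>" "quot_op1 \<tau> pl X \<in> W // \<tau>" "quot_op1 \<tau> mi X \<in> W // \<tau>"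
  using assms
  by (auto elim!: quotientE simp: quot_neg_class quot_pl_class quot_mi_class
      quotientI neg_closed pl_closed mi_closed)

lemma quot_neg_neg:
  assumes "X \<in> W // \<tau>"
  shows "quot_op1 \<tau> neg (quot_op1 \<tau> neg X) = X"
  using assms by (auto elim!: quotientE simp: quot_neg_class neg_closed neg_neg)

lemma quotient_qw_star_flat:
  "qw_star (W // \<tau>) (quot_op2 \<tau> imp) (quot_op1 \<tau> neg) (quot_op1 \<tau> pl) (quot_op1 \<tau> mi) R
   \<and> qw_flat (quot_op2 \<tau> imp) R"
  unfolding qw_star_def qw_flat_def qw_join_def
  by (simp add: R_in_quotient quot_imp_eq_R quot_unary_R quot_unary_closed quot_neg_neg)

end

theorem proposition4p4:
  fixes W :: "'a set" and imp :: "'a \<Rightarrow> 'a \<Rightarrow> 'a" and neg pl mi :: "'a \<Rightarrow> 'a" and one :: 'a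
  assumes "qw_star W imp neg pl mi one"
  defines "\<tau> \<equiv> qw_tau W imp one"
  shows "qw_star (W // \<tau>) (quot_op2 \<tau> imp) (quot_op1 \<tau> neg) (quot_op1 \<tau> pl) (quot_op1 \<tau> mi)
            (\<tau> `` {one})
       \<and> qw_flat (quot_op2 \<tau> imp) (\<tau> `` {one})"
proof -
  interpret quasi_wajsberg_star W imp neg pl mi one by (rule quasi_wajsberg_star.intro) fact
  show ?thesis
    unfolding \<tau>_def class_one by (rule quotient_qw_star_flat)
qed

end
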